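(* Consider any instance of set cover with $n$ elements and $m$ sets with nonnegative costs; let $B\in\mathbb{R}_+$ and $k\in\mathbb{Z}_+$ be values such that (i) for every element, the minimum cost of a set covering it is at least $36\ln m\cdot\frac{B}{k}$, and (ii) for every $k$-subset of elements, the minimum cost of a subfamily covering it is at most $B$. Then the minimum cost of a subfamily covering all elements is at most $O(\log n)\cdot B$.
   Context: Here $O(\log n)\cdot B$ means at most an absolute constant times $\log n\cdot B$, the constant being independent of the instance. *)

theory Defs
  imports Complex_Main
begin

definition covers :: "(nat \<Rightarrow> nat set) \<Rightarrow> nat set \<Rightarrow> nat set \<Rightarrow> bool" where
  "covers S F X \<longleftrightarrow> X \<subseteq> (\<Union>i\<in>F. S i)"

end

theory Submission imports Defs begin

(*
  The cover is built greedily. Call a set efficient for the uncovered part R if it costs at most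
  e^2 B / |R| per element of R it covers; while |R| > k an efficient set exists. Indeed, every
  k-subset X of R has a cover of cost at most B, so some set i of that cover meets X in at least
  k c_i / B >= ln m elements. If i were inefficient, a binomial tail estimate shows that fewer
  than a fraction exp (- k c_i / B) <= 1/m of the k-subsets of R meet S_i that much, and a union
  bound over the m sets contradicts the fact that every k-subset is met that much by some set.
  Adding efficient sets until at most k elements remain costs at most
  e^2 B (sum of d/r) <= e^2 B (1 + ln n), and the last k elements cost at most B.
*)

lemma power_div_fact_le_exp:
  fixes x :: real assumes "x \<ge> 0" shows "x ^ n / fact n \<le> exp x"
proof -
  have "(\<Sum>j\<in>{n}. inverse (fact j) * x ^ j) \<le> (\<Sum>j. inverse (fact j) * x ^ j)"
    by (rule sum_le_suminf) (use assms summable_exp[of x] in auto)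
  thus ?thesis by (simp add: exp_def divide_inverse ac_simps)
qed

lemma binomial_mult_power_le:
  "t \<le> r \<Longrightarrow> real (t choose l) * real r ^ l \<le> real (r choose l) * real t ^ l"
proof (induction l arbitrary: t r)
  case 0 then show ?case by simp
next
  case (Suc l)
  show ?case
  proof (cases t)
    case 0 then show ?thesis by simp
  next
    case (Suc t')
    then obtain r' where r: "r = Suc r'" using Suc.prems by (cases r) auto
    have t'r': "t' \<le> r'" using Suc.prems Suc r by simp
    have IH: "real (t' choose l) * real r' ^ l \<le> real (r' choose l) * real t' ^ l"
      using Suc.IH t'r' by blast
    have step: "real (t' choose l) * real r ^ l \<le> real (r' choose l) * real t ^ l"
    proof (cases "r' = 0")
      case True then show ?thesis using t'r' r Suc by simp
    next
      case False
      have ratio: "real t' / real r' \<le> real t / real r"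
        using t'r' False r Suc by (simp add: field_simps)
      have "real (t' choose l) \<le> real (r' choose l) * (real t' / real r') ^ l"
        using IH False by (simp add: field_simps power_divide)
      also have "\<dots> \<le> real (r' choose l) * (real t / real r) ^ l"
        by (intro mult_left_mono power_mono ratio) auto
      finally show ?thesis using r by (simp add: field_simps power_divide)
    qed
    have t_choose: "real (Suc l) * real (t choose Suc l) = real t * real (t' choose l)"
      using Suc_times_binomial[of l t'] Suc by (metis of_nat_mult)
    have r_choose: "real (Suc l) * real (r choose Suc l) = real r * real (r' choose l)"
      using Suc_times_binomial[of l r'] r by (metis of_nat_mult)
    have "real (Suc l) * (real (t choose Suc l) * real r ^ Suc l)
        = real t * real r * (real (t' choose l) * real r ^ l)"
      using t_choose by (simp add: ac_simps)
    also have "\<dots> \<le> real t * real r * (real (r' choose l) * real t ^ l)"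
      by (intro mult_left_mono step) auto
    also have "\<dots> = real (Suc l) * (real (r choose Suc l) * real t ^ Suc l)"
      using r_choose by (simp add: ac_simps)
    finally show ?thesis by simp
  qed
qed

lemma binomial_mult_binomial_lt_exp:
  assumes "t \<le> r" "l \<le> r"
    and small: "real t * real k * exp 2 < real l * real r"
  shows "real (t choose l) * real (k choose l) < real (r choose l) * exp (- real l)"
proof -
  have "0 \<le> real t * real k * exp 2" by simp
  with small have l0: "l \<noteq> 0" by (intro notI) simp
  define c where "c = real (r choose l)"
  define F where "F = (fact l :: real)"
  define P where "P = real r ^ l"
  have c0: "c > 0" unfolding c_def using assms by simp
  have F0: "F > 0" unfolding F_def by simp
  have P0: "P > 0" unfolding P_def using assms l0 by simp
  have tP: "real (t choose l) * P \<le> c * real t ^ l"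
    unfolding P_def c_def by (rule binomial_mult_power_le[OF assms(1)])
  have kF: "real (k choose l) * F \<le> real k ^ l"
    unfolding F_def using binomial_fact_pow[of k l] by (metis of_nat_fact of_nat_le_iff of_nat_mult of_nat_power)
  have tk: "(real t * real k) ^ l < (real l * real r / exp 2) ^ l"
    using small l0 by (intro power_strict_mono) (auto simp: field_simps)
  have ll: "real l ^ l \<le> exp (real l) * F"
    using power_div_fact_le_exp[of "real l" l] unfolding F_def by (simp add: field_simps)
  have "real (t choose l) * real (k choose l) * (F * P) = (real (t choose l) * P) * (real (k choose l) * F)"
    by (simp add: ac_simps)
  also have "\<dots> \<le> (c * real t ^ l) * real k ^ l"
    by (rule mult_mono[OF tP kF]) (use c0 F0 in auto)
  also have "\<dots> = c * (real t * real k) ^ l" by (simp add: power_mult_distrib)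
  also have "\<dots> < c * (real l * real r / exp 2) ^ l" using tk c0 by simp
  also have "\<dots> = c * real l ^ l * P / exp (2 * real l)"
    unfolding P_def by (simp add: power_mult_distrib power_divide exp_of_nat_mult[symmetric] mult.commute)
  also have "\<dots> \<le> c * (exp (real l) * F) * P / exp (2 * real l)"
    using ll c0 P0 by (intro divide_right_mono mult_right_mono mult_left_mono) auto
  also have "\<dots> = (F * P) * (c * exp (- real l))"
    by (simp add: field_simps exp_minus) (simp add: exp_add[symmetric])
  finally show ?thesis using F0 P0 unfolding c_def by (simp add: mult_less_cancel_left_pos mult.assoc)
qed

lemma card_supersets_with_card:
  assumes "finite R" "A \<subseteq> R" "card A = l" "l \<le> k"
  shows "card {X. A \<subseteq> X \<and> X \<subseteq> R \<and> card X = k} = (card R - l) choose (k - l)"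
proof -
  have fA: "finite A" using assms finite_subset by blast
  have "bij_betw (\<lambda>X. X - A) {X. A \<subseteq> X \<and> X \<subseteq> R \<and> card X = k} {Y. Y \<subseteq> R - A \<and> card Y = k - l}"
  proof (rule bij_betw_byWitness[where f'="\<lambda>Y. Y \<union> A"])
    show "(\<lambda>X. X - A) ` {X. A \<subseteq> X \<and> X \<subseteq> R \<and> card X = k} \<subseteq> {Y. Y \<subseteq> R - A \<and> card Y = k - l}"
    proof clarify
      fix X assume X: "A \<subseteq> X" "X \<subseteq> R" "k = card X"
      have "finite X" using X assms finite_subset by blast
      with X fA assms show "X - A \<subseteq> R - A \<and> card (X - A) = card X - l"
        by (auto simp: card_Diff_subset)
    qed
    show "(\<lambda>Y. Y \<union> A) ` {Y. Y \<subseteq> R - A \<and> card Y = k - l} \<subseteq> {X. A \<subseteq> X \<and> X \<subseteq> R \<and> card X = k}"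
    proof clarify
      fix Y assume Y: "Y \<subseteq> R - A" "card Y = k - l"
      have "finite Y" using Y assms finite_subset by blast
      then have "card (Y \<union> A) = card Y + card A" using Y fA by (intro card_Un_disjoint) auto
      with Y assms show "A \<subseteq> Y \<union> A \<and> Y \<union> A \<subseteq> R \<and> card (Y \<union> A) = k" by auto
    qed
  qed auto
  hence "card {X. A \<subseteq> X \<and> X \<subseteq> R \<and> card X = k} = card {Y. Y \<subseteq> R - A \<and> card Y = k - l}"
    by (rule bij_betw_same_card)
  also have "\<dots> = card (R - A) choose (k - l)" using assms by (intro n_subsets) auto
  also have "card (R - A) = card R - l" using assms fA by (simp add: card_Diff_subset)
  finally show ?thesis .
qed

lemma card_subsets_inter_ge_le:
  assumes "finite R" "T \<subseteq> R" "l \<le> k"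
  shows "card {X. X \<subseteq> R \<and> card X = k \<and> l \<le> card (T \<inter> X)}
           \<le> (card T choose l) * ((card R - l) choose (k - l))"
proof -
  let ?As = "{A. A \<subseteq> T \<and> card A = l}"
  let ?sup = "\<lambda>A. {X. A \<subseteq> X \<and> X \<subseteq> R \<and> card X = k}"
  have fT: "finite T" using assms finite_subset by blast
  have cover: "{X. X \<subseteq> R \<and> card X = k \<and> l \<le> card (T \<inter> X)} \<subseteq> (\<Union>A\<in>?As. ?sup A)"
  proof
    fix X assume "X \<in> {X. X \<subseteq> R \<and> card X = k \<and> l \<le> card (T \<inter> X)}"
    then have X: "X \<subseteq> R" "card X = k" "l \<le> card (T \<inter> X)" by auto
    obtain A where "A \<subseteq> T \<inter> X" "card A = l" by (rule obtain_subset_with_card_n[OF X(3)])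
    with X show "X \<in> (\<Union>A\<in>?As. ?sup A)" by blast
  qed
  have "finite (\<Union>A\<in>?As. ?sup A)"
    by (rule finite_subset[of _ "Pow R"]) (use assms(1) in auto)
  then have "card {X. X \<subseteq> R \<and> card X = k \<and> l \<le> card (T \<inter> X)} \<le> card (\<Union>A\<in>?As. ?sup A)"
    using cover by (rule card_mono)
  also have "\<dots> \<le> (\<Sum>A\<in>?As. card (?sup A))"
    by (rule card_UN_le) (rule finite_subset[of _ "Pow T"], use fT in auto)
  also have "\<dots> = (\<Sum>A\<in>?As. (card R - l) choose (k - l))"
    using assms by (intro sum.cong refl card_supersets_with_card) auto
  also have "\<dots> = (card T choose l) * ((card R - l) choose (k - l))"
    using n_subsets[OF fT, of l] by simp
  finally show ?thesis .
qed

lemma card_subsets_inter_ge_lt: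
  assumes R: "finite R" "T \<subseteq> R" "k \<le> card R" and l: "l \<le> k"
    and m: "ln (real m) \<le> real l"
    and small: "real (card T) * real k * exp 2 < real l * real (card R)"
  shows "real (card {X. X \<subseteq> R \<and> card X = k \<and> l \<le> card (T \<inter> X)}) * real m < real (card R choose k)"
proof (cases "m = 0")
  case True
  then show ?thesis using R by simp
next
  case False
  define r where "r = card R"
  define N where "N = real (card {X. X \<subseteq> R \<and> card X = k \<and> l \<le> card (T \<inter> X)})"
  define a where "a = real (card T choose l)"
  define b where "b = real (k choose l)"
  define q where "q = real ((r - l) choose (k - l))"
  have m0: "real m > 0" using False by simp
  have q0: "q > 0" unfolding q_def r_def using R l by simp
  have b0: "b > 0" unfolding b_def using l by simp
  have tr: "card T \<le> r" unfolding r_def using R card_mono by blast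
  have lr: "l \<le> r" unfolding r_def using l R by linarith
  have tail: "a * b < real (r choose l) * exp (- real l)"
    unfolding a_def b_def by (rule binomial_mult_binomial_lt_exp[OF tr lr small[folded r_def]])
  have "real m = exp (ln (real m))" using m0 by simp
  also have "\<dots> \<le> exp (real l)" using m by simp
  finally have me: "real m * exp (- real l) \<le> 1" by (simp add: exp_minus field_simps)
  have "a * b * real m < real (r choose l) * exp (- real l) * real m"
    using tail m0 by (rule mult_strict_right_mono)
  also have "\<dots> \<le> real (r choose l)"
    using me mult_left_mono[OF me, of "real (r choose l)"] by (simp add: ac_simps)
  finally have abm: "a * b * real m < real (r choose l)" .
  have Na: "N \<le> a * q"
    using card_subsets_inter_ge_le[OF R(1,2) l] unfolding N_def a_def q_def r_def of_nat_mult[symmetric]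
    by (simp only: of_nat_le_iff)
  have "N * real m * b \<le> (a * b * real m) * q"
    using mult_right_mono[OF Na, of "real m * b"] m0 b0 by (simp add: ac_simps)
  also have "\<dots> < real (r choose l) * q" using abm q0 by simp
  also have "\<dots> = real (r choose k) * b"
    using arg_cong[OF choose_mult[OF l R(3)], of real] unfolding q_def b_def r_def of_nat_mult by (rule sym)
  finally have "N * real m * b < real (r choose k) * b" .
  then show ?thesis using b0 unfolding N_def r_def by (simp only: mult_less_cancel_right_pos)
qed

lemma card_subsets_meeting_ge_lt:
  fixes h :: real
  assumes R: "finite R" "T \<subseteq> R" "k \<le> card R"
    and m: "ln (real m) \<le> h"
    and small: "real (card T) * real k * exp 2 < h * real (card R)"
  shows "real (card {X. X \<subseteq> R \<and> card X = k \<and> T \<inter> X \<noteq> {} \<and> h \<le> real (card (T \<inter> X))}) * real m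
           < real (card R choose k)"
proof -
  define l where "l = max 1 (nat \<lceil>h\<rceil>)"
  have sub: "{X. X \<subseteq> R \<and> card X = k \<and> T \<inter> X \<noteq> {} \<and> h \<le> real (card (T \<inter> X))}
             \<subseteq> {X. X \<subseteq> R \<and> card X = k \<and> l \<le> card (T \<inter> X)}"
  proof
    fix X assume "X \<in> {X. X \<subseteq> R \<and> card X = k \<and> T \<inter> X \<noteq> {} \<and> h \<le> real (card (T \<inter> X))}"
    then have X: "X \<subseteq> R" "card X = k" "T \<inter> X \<noteq> {}" "h \<le> real (card (T \<inter> X))" by auto
    have "finite (T \<inter> X)" using X R finite_subset by blast
    with X have "l \<le> card (T \<inter> X)" unfolding l_def by (auto simp: Suc_le_eq card_gt_0_iff)
    with X show "X \<in> {X. X \<subseteq> R \<and> card X = k \<and> l \<le> card (T \<inter> X)}" by simp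
  qed
  have fin: "finite {X. X \<subseteq> R \<and> card X = k \<and> l \<le> card (T \<inter> X)}"
    by (rule finite_subset[of _ "Pow R"]) (use R in auto)
  have rk: "real (card R choose k) > 0" using R by simp
  show ?thesis
  proof (cases "l \<le> k")
    case True
    have "ln (real m) \<le> real l" and "real (card T) * real k * exp 2 < real l * real (card R)"
      using m small l_def mult_right_mono[of h "real l" "real (card R)"] by linarith+
    then have "real (card {X. X \<subseteq> R \<and> card X = k \<and> l \<le> card (T \<inter> X)}) * real m < real (card R choose k)"
      using True by (intro card_subsets_inter_ge_lt R)
    moreover have "card {X. X \<subseteq> R \<and> card X = k \<and> T \<inter> X \<noteq> {} \<and> h \<le> real (card (T \<inter> X))}
                   \<le> card {X. X \<subseteq> R \<and> card X = k \<and> l \<le> card (T \<inter> X)}"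
      by (rule card_mono[OF fin sub])
    ultimately show ?thesis
      by (meson le_less_trans mult_right_mono of_nat_0_le_iff of_nat_mono)
  next
    case False
    have "{X. X \<subseteq> R \<and> card X = k \<and> l \<le> card (T \<inter> X)} = {}"
    proof (rule equals0I)
      fix X assume "X \<in> {X. X \<subseteq> R \<and> card X = k \<and> l \<le> card (T \<inter> X)}"
      then have X: "X \<subseteq> R" "l \<le> card (T \<inter> X)" "k = card X" by auto
      have "card (T \<inter> X) \<le> card X" using X R finite_subset by (metis card_mono inf_le2)
      with X False show False by simp
    qed
    then have "{X. X \<subseteq> R \<and> card X = k \<and> T \<inter> X \<noteq> {} \<and> h \<le> real (card (T \<inter> X))} = {}"
      using sub by blast
    with rk show ?thesis by (metis card.empty mult_zero_left of_nat_0)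
  qed
qed

lemma cover_has_efficient_member:
  fixes S :: "nat \<Rightarrow> nat set" and c :: "nat \<Rightarrow> real"
  assumes F: "finite F" "covers S F X" "sum c F \<le> B" "\<forall>i\<in>F. 0 \<le> c i"
    and X: "finite X" "X \<noteq> {}" and B: "0 \<le> B"
  shows "\<exists>i\<in>F. S i \<inter> X \<noteq> {} \<and> real (card X) * c i \<le> B * real (card (S i \<inter> X))"
proof (rule ccontr)
  assume none: "\<not> ?thesis"
  define G where "G = {i\<in>F. S i \<inter> X \<noteq> {}}"
  have fG: "finite G" using F G_def by simp
  have worse: "B * real (card (S i \<inter> X)) < real (card X) * c i" if "i \<in> G" for i
    using none that unfolding G_def by auto
  have XG: "X \<subseteq> (\<Union>i\<in>G. S i \<inter> X)" using F(2) unfolding covers_def G_def by blast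
  then have "card X \<le> (\<Sum>i\<in>G. card (S i \<inter> X))"
    using card_mono[OF _ XG] card_UN_le[OF fG, of "\<lambda>i. S i \<inter> X"] fG X by (meson finite_UN_I finite_Int order_trans)
  then have "real (card X) \<le> (\<Sum>i\<in>G. real (card (S i \<inter> X)))"
    by (simp only: of_nat_sum[symmetric] of_nat_le_iff)
  then have "B * real (card X) \<le> (\<Sum>i\<in>G. B * real (card (S i \<inter> X)))"
    using B by (simp add: sum_distrib_left[symmetric] mult_left_mono)
  also have "\<dots> < (\<Sum>i\<in>G. real (card X) * c i)"
    using worse XG X(2) by (intro sum_strict_mono fG) auto
  also have "\<dots> \<le> real (card X) * B"
    using F sum_mono2[OF F(1), of G c] unfolding G_def sum_distrib_left[symmetric]
    by (intro mult_left_mono) force+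
  finally show False by simp
qed

lemma exists_efficient_set_of_hits:
  fixes S :: "nat \<Rightarrow> nat set" and c :: "nat \<Rightarrow> real"
  assumes fin: "finite I" "finite R" and k: "0 < k" "k \<le> card R" and B: "0 < B"
    and cheap: "\<forall>i\<in>I. S i \<inter> R \<noteq> {} \<longrightarrow> ln (real (card I)) * B / real k \<le> c i"
    and hits: "\<forall>X\<subseteq>R. card X = k \<longrightarrow> (\<exists>i\<in>I. S i \<inter> X \<noteq> {} \<and> real k * c i \<le> B * real (card (S i \<inter> X)))"
  shows "\<exists>i\<in>I. S i \<inter> R \<noteq> {} \<and> c i * real (card R) \<le> exp 2 * B * real (card (S i \<inter> R))"
proof (rule ccontr)
  assume "\<not> ?thesis"
  then have inefficient: "exp 2 * B * real (card (S i \<inter> R)) < c i * real (card R)"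
    if "i \<in> I" "S i \<inter> R \<noteq> {}" for i
    using that by force
  define N where "N i = {X. X \<subseteq> R \<and> card X = k \<and> S i \<inter> R \<inter> X \<noteq> {}
                          \<and> real k * c i / B \<le> real (card (S i \<inter> R \<inter> X))}" for i
  let ?Xs = "{X. X \<subseteq> R \<and> card X = k}"
  obtain X0 where "X0 \<subseteq> R" "card X0 = k" using obtain_subset_with_card_n[OF k(2)] by blast
  with hits obtain i0 where "i0 \<in> I" by blast
  with fin(1) have I: "0 < real (card I)" by (auto simp: card_gt_0_iff)
  have "?Xs \<subseteq> (\<Union>i\<in>I. N i)"
  proof
    fix X assume "X \<in> ?Xs"
    then have X: "X \<subseteq> R" "card X = k" by auto
    then obtain i where "i \<in> I" "S i \<inter> X \<noteq> {}" "real k * c i \<le> B * real (card (S i \<inter> X))"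
      using hits by blast
    moreover have "S i \<inter> R \<inter> X = S i \<inter> X" using X by blast
    ultimately have "X \<in> N i" using X B unfolding N_def by (simp add: field_simps)
    with \<open>i \<in> I\<close> show "X \<in> (\<Union>i\<in>I. N i)" by blast
  qed
  then have "real (card ?Xs) \<le> real (card (\<Union>i\<in>I. N i))"
    by (intro of_nat_mono card_mono) (auto simp: N_def intro: finite_subset[of _ "Pow R"] fin)
  also have "\<dots> \<le> (\<Sum>i\<in>I. real (card (N i)))"
    by (simp only: of_nat_sum[symmetric] of_nat_le_iff card_UN_le[OF fin(1)])
  also have "\<dots> < (\<Sum>i\<in>I. real (card ?Xs) / real (card I))"
  proof (rule sum_strict_mono)
    fix i assume i: "i \<in> I"
    have "real (card (N i)) * real (card I) < real (card ?Xs)"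
    proof (cases "S i \<inter> R = {}")
      case True
      then show ?thesis using k fin by (simp add: N_def n_subsets)
    next
      case False
      have "ln (real (card I)) \<le> real k * c i / B"
        using cheap i False k B by (simp add: field_simps)
      moreover have "real (card (S i \<inter> R)) * real k * exp 2 < real k * c i / B * real (card R)"
        using inefficient[OF i False] k B by (simp add: field_simps)
      ultimately show ?thesis
        unfolding N_def n_subsets[OF fin(2)] using fin k by (intro card_subsets_meeting_ge_lt) auto
    qed
    then show "real (card (N i)) < real (card ?Xs) / real (card I)"
      using I by (simp add: less_divide_eq)
  qed (use fin I in auto)
  also have "\<dots> = real (card ?Xs)" using I by simp
  finally show False by simp
qed

lemma exists_efficient_set:
  fixes S :: "nat \<Rightarrow> nat set" and c :: "nat \<Rightarrow> real"
  assumes fin: "finite I" "finite R" and k: "0 < k" "k \<le> card R" and B: "0 \<le> B"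
    and cnn: "\<forall>i\<in>I. 0 \<le> c i"
    and cheap: "\<forall>i\<in>I. S i \<inter> R \<noteq> {} \<longrightarrow> ln (real (card I)) * B / real k \<le> c i"
    and cov: "\<forall>X\<subseteq>R. card X = k \<longrightarrow> (\<exists>F\<subseteq>I. covers S F X \<and> sum c F \<le> B)"
  shows "\<exists>i\<in>I. S i \<inter> R \<noteq> {} \<and> c i * real (card R) \<le> exp 2 * B * real (card (S i \<inter> R))"
proof -
  have hits: "\<forall>X\<subseteq>R. card X = k \<longrightarrow> (\<exists>i\<in>I. S i \<inter> X \<noteq> {} \<and> real k * c i \<le> B * real (card (S i \<inter> X)))"
  proof (intro allI impI)
    fix X assume X: "X \<subseteq> R" "card X = k"
    obtain F where F: "F \<subseteq> I" "covers S F X" "sum c F \<le> B" using cov X by blast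
    have "finite X" "X \<noteq> {}" using X fin k finite_subset by auto
    then show "\<exists>i\<in>I. S i \<inter> X \<noteq> {} \<and> real k * c i \<le> B * real (card (S i \<inter> X))"
      using cover_has_efficient_member[OF _ F(2,3)] F(1) fin cnn B X finite_subset by blast
  qed
  show ?thesis
  proof (cases "B = 0")
    case True
    obtain X where X: "X \<subseteq> R" "card X = k" using obtain_subset_with_card_n[OF k(2)] by blast
    then obtain i where "i \<in> I" "S i \<inter> X \<noteq> {}" "real k * c i \<le> B * real (card (S i \<inter> X))"
      using hits by blast
    with X k cnn True show ?thesis by (intro bexI[of _ i]) (auto simp: mult_le_0_iff)
  next
    case False
    with B fin k cheap hits show ?thesis by (intro exists_efficient_set_of_hits) auto
  qed
qed

definition log_potential :: "nat \<Rightarrow> real" where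
  "log_potential r = (if r = 0 then 0 else 1 + ln (real r))"

lemma log_potential_nonneg: "0 \<le> log_potential r"
  unfolding log_potential_def by auto

lemma log_potential_step:
  assumes "1 \<le> d" "d \<le> r" shows "real d / real r + log_potential (r - d) \<le> log_potential r"
proof (cases "d = r")
  case True then show ?thesis using assms unfolding log_potential_def by simp
next
  case False
  with assms have rd: "0 < r - d" and r0: "0 < r" by simp_all
  have "ln (real (r - d) / real r) \<le> real (r - d) / real r - 1"
    using rd r0 by (intro ln_le_minus_one) auto
  also have "\<dots> = - (real d / real r)" using assms r0 by (simp add: of_nat_diff field_simps)
  finally show ?thesis using rd r0 unfolding log_potential_def by (simp add: ln_div)
qed

lemma log_potential_amortized:
  assumes "x * real r \<le> exp 2 * B * real d" "1 \<le> d" "d \<le> r" "0 \<le> B"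
    and "y \<le> exp 2 * B * log_potential (r - d) + B"
  shows "x + y \<le> exp 2 * B * log_potential r + B"
proof -
  have "x \<le> exp 2 * B * (real d / real r)"
    using assms(1-3) by (simp add: field_simps)
  then have "x + y \<le> exp 2 * B * (real d / real r + log_potential (r - d)) + B"
    using assms(5) by (simp add: algebra_simps)
  also have "\<dots> \<le> exp 2 * B * log_potential r + B"
    using log_potential_step[OF assms(2,3)] assms(4) by (simp add: mult_left_mono)
  finally show ?thesis .
qed

lemma greedy_cover:
  fixes S :: "nat \<Rightarrow> nat set" and c :: "nat \<Rightarrow> real"
  assumes fI: "finite I" and k: "0 < k" and B: "0 \<le> B" and cnn: "\<forall>i\<in>I. 0 \<le> c i"
    and cheap: "\<forall>e\<in>U. \<forall>i\<in>I. e \<in> S i \<longrightarrow> ln (real (card I)) * B / real k \<le> c i"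
    and cov: "\<forall>X\<subseteq>U. card X \<le> k \<longrightarrow> (\<exists>F\<subseteq>I. covers S F X \<and> sum c F \<le> B)"
  shows "finite R \<Longrightarrow> R \<subseteq> U
           \<Longrightarrow> \<exists>F\<subseteq>I. covers S F R \<and> sum c F \<le> exp 2 * B * log_potential (card R) + B"
proof (induction "card R" arbitrary: R rule: less_induct)
  case less
  show ?case
  proof (cases "card R \<le> k")
    case True
    then obtain F where F: "F \<subseteq> I" "covers S F R" "sum c F \<le> B"
      using cov less.prems(2) by blast
    have "0 \<le> exp 2 * B * log_potential (card R)" using B log_potential_nonneg by simp
    with F show ?thesis by (intro exI[of _ F]) auto
  next
    case False
    have cheap_R: "\<forall>i\<in>I. S i \<inter> R \<noteq> {} \<longrightarrow> ln (real (card I)) * B / real k \<le> c i"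
      using cheap less.prems(2) by blast
    have cov_R: "\<forall>X\<subseteq>R. card X = k \<longrightarrow> (\<exists>F\<subseteq>I. covers S F X \<and> sum c F \<le> B)"
      using cov less.prems(2) by auto
    have "k \<le> card R" using False by simp
    then obtain i where i: "i \<in> I" "S i \<inter> R \<noteq> {}"
      and efficient: "c i * real (card R) \<le> exp 2 * B * real (card (S i \<inter> R))"
      using exists_efficient_set[OF fI less.prems(1) k _ B cnn cheap_R cov_R] by blast
    define d where "d = card (S i \<inter> R)"
    have d: "1 \<le> d" "d \<le> card R" unfolding d_def using i(2) less.prems(1)
      by (simp_all add: Suc_leI card_gt_0_iff card_mono)
    have card_rest: "card (R - S i) = card R - d" unfolding d_def
      using card_Diff_subset_Int[of R "S i"] less.prems(1) by (simp add: Int_commute)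
    obtain F where F: "F \<subseteq> I" "covers S F (R - S i)"
      and cost: "sum c F \<le> exp 2 * B * log_potential (card R - d) + B"
    proof -
      have "card (R - S i) < card R" using card_rest d by simp
      moreover have "finite (R - S i)" "R - S i \<subseteq> U" using less.prems by auto
      ultimately show ?thesis using that less.hyps[of "R - S i"] unfolding card_rest by blast
    qed
    have "covers S (insert i F) R" using F(2) unfolding covers_def by blast
    moreover have "sum c (insert i F) \<le> exp 2 * B * log_potential (card R) + B"
    proof -
      have "finite F" using F(1) fI finite_subset by blast
      then have "sum c (insert i F) \<le> c i + sum c F"
        using cnn i(1) by (cases "i \<in> F") (simp_all add: insert_absorb)
      also have "\<dots> \<le> exp 2 * B * log_potential (card R) + B"
        using efficient d B cost unfolding d_def by (rule log_potential_amortized)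
      finally show ?thesis .
    qed
    ultimately show ?thesis using F(1) i(1) by blast
  qed
qed

lemma greedy_bound_le_ln:
  assumes "2 \<le> n" "0 \<le> B"
  shows "exp 2 * B * log_potential n + B \<le> (3 * exp 2 + 2) * ln (real n) * B"
proof -
  have "ln (2::real) \<ge> 1/2"
    using ln_le_minus_one[of "1/2::real"] by (simp add: ln_div)
  moreover have "ln (2::real) \<le> ln (real n)" using assms by simp
  ultimately have half: "1/2 \<le> ln (real n)" by linarith
  have "exp 2 * B * log_potential n + B = exp 2 * B * (1 + ln (real n)) + 1 * B"
    using assms unfolding log_potential_def by simp
  also have "\<dots> \<le> exp 2 * B * (3 * ln (real n)) + (2 * ln (real n)) * B"
    using half assms by (intro add_mono mult_left_mono mult_right_mono) auto
  also have "\<dots> = (3 * exp 2 + 2) * ln (real n) * B" by (simp add: algebra_simps)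
  finally show ?thesis .
qed

theorem mainTheorem7:
  "\<exists>C::real. \<forall>(U::nat set) (I::nat set) (S::nat \<Rightarrow> nat set) (c::nat \<Rightarrow> real) (B::real) (k::nat).
     finite U \<and> finite I \<and> card U \<ge> 2 \<and> (\<forall>i\<in>I. S i \<subseteq> U) \<and> (\<forall>i\<in>I. c i \<ge> 0) \<and>
     B \<ge> 0 \<and> k > 0 \<and>
     (\<forall>e\<in>U. \<forall>i\<in>I. e \<in> S i \<longrightarrow> c i \<ge> 36 * ln (real (card I)) * B / real k) \<and>
     (\<forall>X\<subseteq>U. card X \<le> k \<longrightarrow> (\<exists>F\<subseteq>I. covers S F X \<and> sum c F \<le> B))
     \<longrightarrow> (\<exists>F\<subseteq>I. covers S F U \<and> sum c F \<le> C * ln (real (card U)) * B)"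
proof (rule exI[of _ "3 * exp 2 + 2"], intro allI impI, elim conjE)
  fix U I :: "nat set" and S :: "nat \<Rightarrow> nat set" and c :: "nat \<Rightarrow> real" and B :: real and k :: nat
  assume fU: "finite U" and fI: "finite I" and U2: "card U \<ge> 2" and cnn: "\<forall>i\<in>I. c i \<ge> 0"
    and B: "B \<ge> 0" and k: "k > 0"
    and cheap36: "\<forall>e\<in>U. \<forall>i\<in>I. e \<in> S i \<longrightarrow> c i \<ge> 36 * ln (real (card I)) * B / real k"
    and cov: "\<forall>X\<subseteq>U. card X \<le> k \<longrightarrow> (\<exists>F\<subseteq>I. covers S F X \<and> sum c F \<le> B)"
    and "\<forall>i\<in>I. S i \<subseteq> U"
  have "0 \<le> ln (real (card I))" by (cases "card I = 0") auto
  then have "ln (real (card I)) * B / real k \<le> 36 * ln (real (card I)) * B / real k"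
    using B by (intro divide_right_mono mult_right_mono) auto
  then have cheap: "\<forall>e\<in>U. \<forall>i\<in>I. e \<in> S i \<longrightarrow> ln (real (card I)) * B / real k \<le> c i"
    using cheap36 order_trans by blast
  obtain F where "F \<subseteq> I" "covers S F U" "sum c F \<le> exp 2 * B * log_potential (card U) + B"
    using greedy_cover[OF fI k B cnn cheap cov fU subset_refl] by blast
  then show "\<exists>F\<subseteq>I. covers S F U \<and> sum c F \<le> (3 * exp 2 + 2) * ln (real (card U)) * B"
    using greedy_bound_le_ln[OF U2 B] by (meson order_trans)
qed

end
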